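(* Let $V=\bigoplus_{i\in I}B_i$ be a near vector space over a commutative $F$ with $I$ finite, where the $B_i$ are the blocks of $V$. Then for every $\Delta\subseteq I$ the subset $\bigoplus_{i\in\Delta}B_i\subseteq V$ is definable by a quantifier-free formula (of $\mathcal L_{\bar F nvs}$).
   Context: A near vector space $(V,F)$: $(V,+)$ a group, $F$ a set of endomorphisms containing $0,1,-1$, with $F\setminus\{0\}$ a subgroup of $\mathrm{Aut}(V,+)$ acting fixed point freely ($\alpha x=\beta x\Rightarrow\alpha=\beta$ or $x=0$), such that the quasi-kernel $Q(V)=\{u:\forall\alpha,\beta\in F\,\exists\gamma\in F\ \alpha u+\beta u=\gamma u\}$ generates $V$. Commutative: $\alpha(\beta v)=\beta(\alpha v)$. The blocks of $V$ are the summands in André's decomposition of $V$ into maximal regular near vector subspaces (regular: any two nonzero quasi-kernel elements $u,v$ satisfy $u+\lambda v\in Q(V)$ for some $\lambda\neq0$), each nonzero element of $Q(V)$ lying in exactly one block. $\bar F$ is the set of formal finite sums $\alpha_1+_\cdot\cdots+_\cdot\alpha_n$ of elements of $F$ acting by $v\mapsto\alpha_1(v)+\cdots+\alpha_n(v)$. $\mathcal L_{\bar Fnvs}=\{+,0,(\lambda)_{\lambda\in\bar F}\}$, with each unary function symbol interpreted as the corresponding action; each such function is quantifier-free definable from $\mathcal L_{Fnvs}=\{+,0,(\lambda)_{\lambda\in F}\}$. *)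

theory Defs
  imports Main
begin

text \<open>The additive group (V,+) is modelled by a type of class group_add (carrier = UNIV).
  F is a set of maps on V.\<close>

definition zero_map :: "'v::group_add \<Rightarrow> 'v" where
  "zero_map = (\<lambda>x. 0)"

inductive_set gen_grp :: "'v::group_add set \<Rightarrow> 'v set" for S :: "'v set" where
  gen_zero: "0 \<in> gen_grp S"
| gen_base: "s \<in> S \<Longrightarrow> s \<in> gen_grp S"
| gen_add: "a \<in> gen_grp S \<Longrightarrow> b \<in> gen_grp S \<Longrightarrow> a + b \<in> gen_grp S"
| gen_neg: "a \<in> gen_grp S \<Longrightarrow> - a \<in> gen_grp S"

definition quasi_kernel :: "('v::group_add \<Rightarrow> 'v) set \<Rightarrow> 'v set" where
  "quasi_kernel F = {u. \<forall>\<alpha>\<in>F. \<forall>\<beta>\<in>F. \<exists>\<gamma>\<in>F. \<alpha> u + \<beta> u = \<gamma> u}"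

definition near_vector_space :: "('v::group_add \<Rightarrow> 'v) set \<Rightarrow> bool" where
  "near_vector_space F \<longleftrightarrow>
     (\<forall>f\<in>F. \<forall>x y. f (x + y) = f x + f y) \<and>
     zero_map \<in> F \<and> id \<in> F \<and> uminus \<in> F \<and>
     (\<forall>f\<in>F - {zero_map}. bij f) \<and>
     (\<forall>f\<in>F - {zero_map}. \<forall>g\<in>F - {zero_map}. f \<circ> g \<in> F) \<and>
     (\<forall>f\<in>F - {zero_map}. inv f \<in> F) \<and>
     (\<forall>\<alpha>\<in>F. \<forall>\<beta>\<in>F. \<forall>x. \<alpha> x = \<beta> x \<longrightarrow> \<alpha> = \<beta> \<or> x = 0) \<and>
     gen_grp (quasi_kernel F) = UNIV"

definition commutative_nvs :: "('v::group_add \<Rightarrow> 'v) set \<Rightarrow> bool" where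
  "commutative_nvs F \<longleftrightarrow> (\<forall>\<alpha>\<in>F. \<forall>\<beta>\<in>F. \<forall>v. \<alpha> (\<beta> v) = \<beta> (\<alpha> v))"

text \<open>Near vector subspace: an F-invariant subgroup W such that (W,F) is a near vector
  space, i.e. W is generated by its quasi-kernel Q(W) = Q(V) \<inter> W.\<close>
definition nv_subspace :: "('v::group_add \<Rightarrow> 'v) set \<Rightarrow> 'v set \<Rightarrow> bool" where
  "nv_subspace F W \<longleftrightarrow>
     0 \<in> W \<and> (\<forall>a\<in>W. \<forall>b\<in>W. a + b \<in> W) \<and> (\<forall>a\<in>W. - a \<in> W) \<and>
     (\<forall>f\<in>F. \<forall>w\<in>W. f w \<in> W) \<and>
     W = gen_grp (quasi_kernel F \<inter> W)"

definition regular_subspace :: "('v::group_add \<Rightarrow> 'v) set \<Rightarrow> 'v set \<Rightarrow> bool" where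
  "regular_subspace F W \<longleftrightarrow> nv_subspace F W \<and>
     (\<forall>u\<in>quasi_kernel F \<inter> W - {0}. \<forall>v\<in>quasi_kernel F \<inter> W - {0}.
        \<exists>l\<in>F - {zero_map}. u + l v \<in> quasi_kernel F)"

definition is_block :: "('v::group_add \<Rightarrow> 'v) set \<Rightarrow> 'v set \<Rightarrow> bool" where
  "is_block F W \<longleftrightarrow> regular_subspace F W \<and>
     (\<forall>W'. regular_subspace F W' \<and> W \<subseteq> W' \<longrightarrow> W' = W)"

text \<open>Elements of F-bar: formal finite sums alpha_1 +. ... +. alpha_n, as lists over F,
  acting by v \<mapsto> alpha_1 v + ... + alpha_n v.\<close>
fun fbar_act :: "('v::group_add \<Rightarrow> 'v) list \<Rightarrow> 'v \<Rightarrow> 'v" where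
  "fbar_act [] v = 0"
| "fbar_act (a # as) v = a v + fbar_act as v"

text \<open>Terms and quantifier-free formulas of L_{Fbar nvs} in the single free variable x.\<close>
datatype 'v tm = X | Zero | Add "'v tm" "'v tm" | Act "('v \<Rightarrow> 'v) list" "'v tm"

datatype 'v qf = Eq "'v tm" "'v tm" | Neg "'v qf" | Conj "'v qf" "'v qf" | Disj "'v qf" "'v qf"

fun tm_wf :: "('v \<Rightarrow> 'v) set \<Rightarrow> 'v tm \<Rightarrow> bool" where
  "tm_wf F X = True"
| "tm_wf F Zero = True"
| "tm_wf F (Add s t) = (tm_wf F s \<and> tm_wf F t)"
| "tm_wf F (Act l t) = (set l \<subseteq> F \<and> tm_wf F t)"

fun qf_wf :: "('v \<Rightarrow> 'v) set \<Rightarrow> 'v qf \<Rightarrow> bool" where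
  "qf_wf F (Eq s t) = (tm_wf F s \<and> tm_wf F t)"
| "qf_wf F (Neg p) = qf_wf F p"
| "qf_wf F (Conj p q) = (qf_wf F p \<and> qf_wf F q)"
| "qf_wf F (Disj p q) = (qf_wf F p \<and> qf_wf F q)"

fun tm_eval :: "'v::group_add tm \<Rightarrow> 'v \<Rightarrow> 'v" where
  "tm_eval X v = v"
| "tm_eval Zero v = 0"
| "tm_eval (Add s t) v = tm_eval s v + tm_eval t v"
| "tm_eval (Act l t) v = fbar_act l (tm_eval t v)"

fun qf_holds :: "'v::group_add qf \<Rightarrow> 'v \<Rightarrow> bool" where
  "qf_holds (Eq s t) v = (tm_eval s v = tm_eval t v)"
| "qf_holds (Neg p) v = (\<not> qf_holds p v)"
| "qf_holds (Conj p q) v = (qf_holds p v \<and> qf_holds q v)"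
| "qf_holds (Disj p q) v = (qf_holds p v \<or> qf_holds q v)"

definition qf_definable :: "('v::group_add \<Rightarrow> 'v) set \<Rightarrow> 'v set \<Rightarrow> bool" where
  "qf_definable F S \<longleftrightarrow> (\<exists>\<phi>. qf_wf F \<phi> \<and> (\<forall>v. v \<in> S \<longleftrightarrow> qf_holds \<phi> v))"

end

(* Every block is the set of quasi-kernel elements satisfying all relations
   \<alpha> u + \<beta> u = \<gamma> u of one of its nonzero elements u (or is {0}). A relation of one
   block failing on another yields the F-bar element \<alpha> + \<beta> - \<gamma>, which kills the
   first block and is injective on the second. Composing these for all j \<noteq> i gives a
   term T_i that vanishes on every B_j, j \<noteq> i, and is injective on B_i. As the blocks
   generate the abelian group V, the sum of the B_i with i \<in> \<Delta> is the common zero set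
   of the T_i with i \<notin> \<Delta>. *)

theory Submission
  imports Defs
begin

definition add_subgroup :: "'v::group_add set \<Rightarrow> bool" where
  "add_subgroup S \<longleftrightarrow> 0 \<in> S \<and> (\<forall>a\<in>S. \<forall>b\<in>S. a + b \<in> S) \<and> (\<forall>a\<in>S. - a \<in> S)"

lemma add_subgroup_zero: "add_subgroup {0}"
  by (simp add: add_subgroup_def)

lemma gen_grp_least:
  assumes "S \<subseteq> T" and "add_subgroup T"
  shows "gen_grp S \<subseteq> T"
proof
  fix x assume "x \<in> gen_grp S"
  then show "x \<in> T"
    by induction (use assms in \<open>auto simp: add_subgroup_def\<close>)
qed

lemma add_subgroup_gen_grp: "add_subgroup (gen_grp S)"
  unfolding add_subgroup_def by (auto intro: gen_grp.intros)

lemma gen_grp_eq_self: "add_subgroup S \<Longrightarrow> gen_grp S = S"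
  using gen_grp_least[of S S] gen_grp.gen_base[of _ S] by blast

lemma gen_grp_Un_decompose:
  fixes A B :: "'v::group_add set"
  assumes add_comm: "\<And>x y::'v. x + y = y + x"
    and "v \<in> gen_grp (A \<union> B)"
  obtains a b where "a \<in> gen_grp A" "b \<in> gen_grp B" "v = a + b"
proof -
  interpret abel: ab_group_add "(+)" "0::'v" "(-)" uminus
    by unfold_locales (simp_all add: add_comm)
  have "\<exists>a\<in>gen_grp A. \<exists>b\<in>gen_grp B. v = a + b"
    using \<open>v \<in> gen_grp (A \<union> B)\<close>
  proof induction
    case gen_zero
    then show ?case using gen_grp.gen_zero by force
  next
    case (gen_base s)
    then show ?case using gen_grp.gen_zero gen_grp.gen_base by (metis Un_iff add_0 add_0_right)
  next
    case (gen_add x y)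
    then obtain a1 b1 a2 b2 where "a1 \<in> gen_grp A" "b1 \<in> gen_grp B" "x = a1 + b1"
      "a2 \<in> gen_grp A" "b2 \<in> gen_grp B" "y = a2 + b2" by blast
    moreover have "(a1 + b1) + (a2 + b2) = (a1 + a2) + (b1 + b2)"
      by (simp only: add.assoc abel.add.left_commute[of b1 a2])
    ultimately show ?case using gen_grp.gen_add by metis
  next
    case (gen_neg x)
    then obtain a b where "a \<in> gen_grp A" "b \<in> gen_grp B" "x = a + b" by blast
    moreover have "- (a + b) = - a + - b" by (simp add: abel.minus_add_distrib)
    ultimately show ?case using gen_grp.gen_neg by metis
  qed
  with that show ?thesis by blast
qed

definition additive :: "('v::group_add \<Rightarrow> 'v) \<Rightarrow> bool" where
  "additive g \<longleftrightarrow> (\<forall>x y. g (x + y) = g x + g y)"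

lemma additiveD: "additive g \<Longrightarrow> g (x + y) = g x + g y"
  unfolding additive_def by simp

lemma additive_zero: "additive g \<Longrightarrow> g 0 = 0"
  using additiveD[of g 0 0] add_left_imp_eq[of "g 0" "g 0" 0] by simp

lemma additive_minus: "additive g \<Longrightarrow> g (- x) = - g x"
  using additiveD[of g x "- x"] additive_zero[of g] by (simp add: minus_unique)

lemma add_subgroup_kernel: "additive g \<Longrightarrow> add_subgroup {v. g v = 0}"
  unfolding add_subgroup_def by (simp add: additiveD additive_zero additive_minus)

lemma gen_grp_subset_kernel:
  assumes "additive g" and "\<And>s. s \<in> S \<Longrightarrow> g s = 0" and "x \<in> gen_grp S"
  shows "g x = 0"
  using gen_grp_least[OF _ add_subgroup_kernel[OF assms(1)]] assms(2,3) by blast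

lemma common_kernel_trivial:
  fixes B :: "'i \<Rightarrow> 'v::group_add set" and T :: "'i \<Rightarrow> 'v \<Rightarrow> 'v"
  assumes add_comm: "\<And>x y::'v. x + y = y + x"
    and "finite E"
    and "\<And>i. i \<in> E \<Longrightarrow> add_subgroup (B i)"
    and "\<And>i. i \<in> E \<Longrightarrow> additive (T i)"
    and "\<And>i k v. i \<in> E \<Longrightarrow> k \<in> E \<Longrightarrow> k \<noteq> i \<Longrightarrow> v \<in> B k \<Longrightarrow> T i v = 0"
    and "\<And>i v. i \<in> E \<Longrightarrow> v \<in> B i \<Longrightarrow> T i v = 0 \<Longrightarrow> v = 0"
    and "b \<in> gen_grp (\<Union>k\<in>E. B k)" and "\<forall>i\<in>E. T i b = 0"
  shows "b = 0"
  using assms(2-)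
proof (induction E arbitrary: b rule: finite_induct)
  case empty
  then show ?case using gen_grp_least[OF _ add_subgroup_zero, of "{}"] by auto
next
  case (insert e E)
  have "(\<Union>k\<in>insert e E. B k) = B e \<union> (\<Union>k\<in>E. B k)" by simp
  then obtain c d where c: "c \<in> gen_grp (B e)" and d: "d \<in> gen_grp (\<Union>k\<in>E. B k)"
    and b: "b = c + d"
    using gen_grp_Un_decompose[OF add_comm] insert.prems(5) by metis
  have "c \<in> B e" using c gen_grp_eq_self insert.prems(1) by blast
  have "T e d = 0"
  proof (rule gen_grp_subset_kernel[OF _ _ d])
    show "additive (T e)" using insert.prems(2) by blast
    show "T e s = 0" if "s \<in> (\<Union>k\<in>E. B k)" for s
      using that insert.prems(3) insert.hyps(2) by blast
  qed
  then have "T e c = 0"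
    using insert.prems(2,6) b additiveD[of "T e" c d] by simp
  then have "c = 0" using insert.prems(4) \<open>c \<in> B e\<close> by blast
  have "d = 0"
  proof (rule insert.IH)
    show "\<forall>i\<in>E. T i d = 0" using insert.prems(6) b \<open>c = 0\<close> by simp
  qed (use d in \<open>blast intro: insert.prems(1-4)\<close>)+
  then show ?case using b \<open>c = 0\<close> by simp
qed

lemma gen_grp_UN_eq_common_kernel:
  fixes B :: "'i \<Rightarrow> 'v::group_add set" and T :: "'i \<Rightarrow> 'v \<Rightarrow> 'v"
  assumes add_comm: "\<And>x y::'v. x + y = y + x"
    and "finite I" and "\<Delta> \<subseteq> I"
    and generates: "gen_grp (\<Union>i\<in>I. B i) = UNIV"
    and subgroup: "\<And>i. i \<in> I \<Longrightarrow> add_subgroup (B i)"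
    and additive: "\<And>i. i \<in> I \<Longrightarrow> additive (T i)"
    and kills: "\<And>i k v. i \<in> I \<Longrightarrow> k \<in> I \<Longrightarrow> k \<noteq> i \<Longrightarrow> v \<in> B k \<Longrightarrow> T i v = 0"
    and injective: "\<And>i v. i \<in> I \<Longrightarrow> v \<in> B i \<Longrightarrow> T i v = 0 \<Longrightarrow> v = 0"
  shows "gen_grp (\<Union>i\<in>\<Delta>. B i) = {v. \<forall>i\<in>I - \<Delta>. T i v = 0}"
proof
  have kernel: "T i v = 0" if "i \<in> I - \<Delta>" "v \<in> gen_grp (\<Union>k\<in>\<Delta>. B k)" for i v
    using gen_grp_subset_kernel[OF additive _ that(2)] kills that(1) \<open>\<Delta> \<subseteq> I\<close> by blast
  then show "gen_grp (\<Union>i\<in>\<Delta>. B i) \<subseteq> {v. \<forall>i\<in>I - \<Delta>. T i v = 0}" by blast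
  show "{v. \<forall>i\<in>I - \<Delta>. T i v = 0} \<subseteq> gen_grp (\<Union>i\<in>\<Delta>. B i)"
  proof
    fix v assume v: "v \<in> {v. \<forall>i\<in>I - \<Delta>. T i v = 0}"
    have "(\<Union>i\<in>I. B i) = (\<Union>i\<in>\<Delta>. B i) \<union> (\<Union>i\<in>I - \<Delta>. B i)"
      using \<open>\<Delta> \<subseteq> I\<close> by blast
    then have "v \<in> gen_grp ((\<Union>i\<in>\<Delta>. B i) \<union> (\<Union>i\<in>I - \<Delta>. B i))"
      using generates by simp
    then obtain a b where a: "a \<in> gen_grp (\<Union>i\<in>\<Delta>. B i)"
      and b: "b \<in> gen_grp (\<Union>i\<in>I - \<Delta>. B i)" and "v = a + b"
      by (rule gen_grp_Un_decompose[OF add_comm])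
    have "T i b = 0" if "i \<in> I - \<Delta>" for i
      using kernel[OF that a] v that \<open>v = a + b\<close> additiveD[OF additive, of i a b] by auto
    then have "b = 0"
      by (intro common_kernel_trivial[OF add_comm, of "I - \<Delta>" B T b])
        (use \<open>finite I\<close> b in \<open>blast intro: subgroup additive kills injective\<close>)+
    then show "v \<in> gen_grp (\<Union>i\<in>\<Delta>. B i)" using a \<open>v = a + b\<close> by simp
  qed
qed

lemma nv_subspace_add_subgroup: "nv_subspace F W \<Longrightarrow> add_subgroup W"
  unfolding nv_subspace_def add_subgroup_def by blast

definition comp_tm :: "('v \<Rightarrow> 'v) list list \<Rightarrow> 'v tm" where
  "comp_tm ls = foldr Act ls X"

lemma tm_eval_comp_tm: "tm_eval (comp_tm ls) v = foldr fbar_act ls v"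
  by (induction ls) (simp_all add: comp_tm_def)

lemma tm_wf_comp_tm: "tm_wf F (comp_tm ls) \<longleftrightarrow> (\<forall>l\<in>set ls. set l \<subseteq> F)"
  by (induction ls) (simp_all add: comp_tm_def)

lemma qf_definable_common_zeros:
  assumes "finite J" and "\<And>i. i \<in> J \<Longrightarrow> tm_wf F (t i)"
  shows "qf_definable F {v. \<forall>i\<in>J. tm_eval (t i) v = 0}"
proof -
  define \<phi> where "\<phi> ks = foldr (\<lambda>i \<psi>. Conj (Eq (t i) Zero) \<psi>) ks (Eq X X)" for ks
  have \<phi>: "set ks \<subseteq> J \<Longrightarrow> qf_wf F (\<phi> ks) \<and> (\<forall>v. qf_holds (\<phi> ks) v \<longleftrightarrow> (\<forall>i\<in>set ks. tm_eval (t i) v = 0))"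
    for ks by (induction ks) (simp_all add: \<phi>_def assms(2))
  obtain ks where "set ks = J" using finite_list[OF assms(1)] by blast
  with \<phi>[of ks] show ?thesis unfolding qf_definable_def by auto
qed

locale commutative_near_vector_space =
  fixes F :: "('v::group_add \<Rightarrow> 'v) set"
  assumes nvs: "near_vector_space F" and comm: "commutative_nvs F"
begin

abbreviation Q :: "'v set" where "Q \<equiv> quasi_kernel F"

lemma F_add: "f \<in> F \<Longrightarrow> f (x + y) = f x + f y"
  and zero_map_in_F: "zero_map \<in> F"
  and id_in_F: "id \<in> F"
  and uminus_in_F: "uminus \<in> F"
  and F_bij: "f \<in> F \<Longrightarrow> f \<noteq> zero_map \<Longrightarrow> bij f"
  and comp_in_F_nonzero: "f \<in> F \<Longrightarrow> f \<noteq> zero_map \<Longrightarrow> g \<in> F \<Longrightarrow> g \<noteq> zero_map \<Longrightarrow> f \<circ> g \<in> F"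
  and inv_in_F: "f \<in> F \<Longrightarrow> f \<noteq> zero_map \<Longrightarrow> inv f \<in> F"
  and F_fixed_point_free: "\<forall>\<alpha>\<in>F. \<forall>\<beta>\<in>F. \<forall>x. \<alpha> x = \<beta> x \<longrightarrow> \<alpha> = \<beta> \<or> x = 0"
  and quasi_kernel_generates: "gen_grp Q = UNIV"
  using nvs unfolding near_vector_space_def by simp_all

lemma F_eq_if_eq_at_nonzero: "\<alpha> \<in> F \<Longrightarrow> \<beta> \<in> F \<Longrightarrow> \<alpha> x = \<beta> x \<Longrightarrow> x \<noteq> 0 \<Longrightarrow> \<alpha> = \<beta>"
  using F_fixed_point_free by blast

lemma F_commute: "\<alpha> \<in> F \<Longrightarrow> \<beta> \<in> F \<Longrightarrow> \<alpha> (\<beta> v) = \<beta> (\<alpha> v)"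
  using comm unfolding commutative_nvs_def by blast

lemma F_additive: "f \<in> F \<Longrightarrow> additive f"
  unfolding additive_def by (simp add: F_add)

lemma F_zero [simp]: "f \<in> F \<Longrightarrow> f 0 = 0"
  by (simp add: F_additive additive_zero)

lemma F_minus: "f \<in> F \<Longrightarrow> f (- x) = - f x"
  by (simp add: F_additive additive_minus)

lemma F_diff: "f \<in> F \<Longrightarrow> f (x - y) = f x - f y"
  using F_add[of f x "- y"] by (simp add: F_minus)

lemma zero_map_apply [simp]: "zero_map x = 0"
  by (simp add: zero_map_def)

lemma comp_in_F:
  assumes "f \<in> F" "g \<in> F"
  shows "f \<circ> g \<in> F"
proof (cases "f = zero_map \<or> g = zero_map")
  case True
  then have "f \<circ> g = zero_map" using F_zero[OF assms(1)] by (auto simp: zero_map_def)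
  then show ?thesis using zero_map_in_F by simp
next
  case False
  then show ?thesis using comp_in_F_nonzero assms by blast
qed

lemma F_eq_zero_iff: "f \<in> F \<Longrightarrow> f \<noteq> zero_map \<Longrightarrow> f x = 0 \<longleftrightarrow> x = 0"
  using F_bij[THEN bij_is_inj] injD[of f x 0] by auto

(* (V,+) is abelian since uminus \<in> F is additive. *)
lemma add_commute: "x + y = y + (x :: 'v)"
proof -
  have "- a + - b = - b + - a" for a b :: 'v
    using F_add[OF uminus_in_F, of a b] minus_add[of a b] by (simp only:)
  from this[of "- x" "- y"] show ?thesis by (simp only: minus_minus)
qed

sublocale abel: ab_group_add "(+)" "0::'v" "(-)" uminus
  by unfold_locales (simp_all add: add_commute)

lemma quasi_kernelD: "u \<in> Q \<Longrightarrow> \<alpha> \<in> F \<Longrightarrow> \<beta> \<in> F \<Longrightarrow> \<exists>\<gamma>\<in>F. \<alpha> u + \<beta> u = \<gamma> u"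
  unfolding quasi_kernel_def by blast

lemma quasi_kernel_diff: "u \<in> Q \<Longrightarrow> \<alpha> \<in> F \<Longrightarrow> \<beta> \<in> F \<Longrightarrow> \<exists>\<gamma>\<in>F. \<alpha> u - \<beta> u = \<gamma> u"
  using quasi_kernelD[of u \<alpha> "uminus \<circ> \<beta>"] comp_in_F[OF uminus_in_F] by simp

definition block_of :: "'v \<Rightarrow> 'v set" where
  "block_of u = {v \<in> Q. \<forall>\<alpha>\<in>F. \<forall>\<beta>\<in>F. \<forall>\<gamma>\<in>F. \<alpha> u + \<beta> u = \<gamma> u \<longrightarrow> \<alpha> v + \<beta> v = \<gamma> v}"

lemma block_of_subset_quasi_kernel: "block_of u \<subseteq> Q"
  unfolding block_of_def by blast

lemma mem_block_ofD:
  "v \<in> block_of u \<Longrightarrow> \<alpha> \<in> F \<Longrightarrow> \<beta> \<in> F \<Longrightarrow> \<gamma> \<in> F \<Longrightarrow> \<alpha> u + \<beta> u = \<gamma> u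
    \<Longrightarrow> \<alpha> v + \<beta> v = \<gamma> v"
  unfolding block_of_def by blast

lemma mem_block_ofI:
  assumes "u \<in> Q"
    and rel: "\<And>\<alpha> \<beta> \<gamma>. \<alpha> \<in> F \<Longrightarrow> \<beta> \<in> F \<Longrightarrow> \<gamma> \<in> F \<Longrightarrow> \<alpha> u + \<beta> u = \<gamma> u
      \<Longrightarrow> \<alpha> v + \<beta> v = \<gamma> v"
  shows "v \<in> block_of u"
proof -
  have "v \<in> Q"
    unfolding quasi_kernel_def using quasi_kernelD[OF \<open>u \<in> Q\<close>] rel by blast
  then show ?thesis unfolding block_of_def using rel by blast
qed

lemma self_mem_block_of: "u \<in> Q \<Longrightarrow> u \<in> block_of u"
  by (rule mem_block_ofI)

lemma zero_mem_block_of: "u \<in> Q \<Longrightarrow> 0 \<in> block_of u"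
  by (rule mem_block_ofI) simp_all

lemma add_mem_block_of:
  assumes "u \<in> Q" "v \<in> block_of u" "w \<in> block_of u"
  shows "v + w \<in> block_of u"
proof (rule mem_block_ofI[OF \<open>u \<in> Q\<close>])
  fix \<alpha> \<beta> \<gamma> assume F: "\<alpha> \<in> F" "\<beta> \<in> F" "\<gamma> \<in> F" and "\<alpha> u + \<beta> u = \<gamma> u"
  then have "\<alpha> v + \<beta> v = \<gamma> v" "\<alpha> w + \<beta> w = \<gamma> w"
    using assms(2,3) mem_block_ofD by blast+
  moreover have "\<alpha> (v + w) + \<beta> (v + w) = (\<alpha> v + \<beta> v) + (\<alpha> w + \<beta> w)"
    using F by (simp add: F_add abel.add_ac)
  ultimately show "\<alpha> (v + w) + \<beta> (v + w) = \<gamma> (v + w)" using F by (simp add: F_add)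
qed

lemma minus_mem_block_of:
  assumes "u \<in> Q" "v \<in> block_of u"
  shows "- v \<in> block_of u"
proof (rule mem_block_ofI[OF \<open>u \<in> Q\<close>])
  fix \<alpha> \<beta> \<gamma> assume F: "\<alpha> \<in> F" "\<beta> \<in> F" "\<gamma> \<in> F" and "\<alpha> u + \<beta> u = \<gamma> u"
  then have "\<alpha> v + \<beta> v = \<gamma> v" using assms(2) mem_block_ofD by blast
  then have "- (\<alpha> v + \<beta> v) = - \<gamma> v" by simp
  then show "\<alpha> (- v) + \<beta> (- v) = \<gamma> (- v)"
    using F by (simp add: F_minus abel.minus_add_distrib)
qed

lemma F_mem_block_of:
  assumes "u \<in> Q" "v \<in> block_of u" "\<delta> \<in> F"
  shows "\<delta> v \<in> block_of u"
proof (rule mem_block_ofI[OF \<open>u \<in> Q\<close>])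
  fix \<alpha> \<beta> \<gamma> assume F: "\<alpha> \<in> F" "\<beta> \<in> F" "\<gamma> \<in> F" and "\<alpha> u + \<beta> u = \<gamma> u"
  then have "\<alpha> v + \<beta> v = \<gamma> v" using assms(2) mem_block_ofD by blast
  moreover have "\<alpha> (\<delta> v) + \<beta> (\<delta> v) = \<delta> (\<alpha> v + \<beta> v)"
    using F \<open>\<delta> \<in> F\<close> by (simp add: F_add F_commute)
  ultimately show "\<alpha> (\<delta> v) + \<beta> (\<delta> v) = \<gamma> (\<delta> v)"
    using F \<open>\<delta> \<in> F\<close> by (simp add: F_commute)
qed

lemma add_subgroup_block_of: "u \<in> Q \<Longrightarrow> add_subgroup (block_of u)"
  unfolding add_subgroup_def
  using zero_mem_block_of add_mem_block_of minus_mem_block_of by blast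

lemma nv_subspace_block_of: "u \<in> Q \<Longrightarrow> nv_subspace F (block_of u)"
proof -
  assume "u \<in> Q"
  moreover have "Q \<inter> block_of u = block_of u" using block_of_subset_quasi_kernel by blast
  ultimately show ?thesis
    unfolding nv_subspace_def
    using add_subgroup_block_of[unfolded add_subgroup_def] gen_grp_eq_self[OF add_subgroup_block_of]
      F_mem_block_of by auto
qed

lemma regular_subspace_block_of: "u \<in> Q \<Longrightarrow> regular_subspace F (block_of u)"
  unfolding regular_subspace_def
proof (intro conjI nv_subspace_block_of ballI)
  fix v w assume "u \<in> Q" and v: "v \<in> Q \<inter> block_of u - {0}" and w: "w \<in> Q \<inter> block_of u - {0}"
  have "(id :: 'v \<Rightarrow> 'v) \<noteq> zero_map"
  proof
    assume "(id :: 'v \<Rightarrow> 'v) = zero_map"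
    then have "w = zero_map w" by (metis id_apply)
    then show False using w by simp
  qed
  moreover have "v + id w \<in> Q"
    using add_mem_block_of[OF \<open>u \<in> Q\<close>] v w block_of_subset_quasi_kernel by auto
  ultimately show "\<exists>l\<in>F - {zero_map}. v + l w \<in> Q" using id_in_F by blast
qed

(* Otherwise l (\<delta> v - \<eta> v) = \<eta> u - \<gamma> u would exhibit v as an F-multiple of u. *)
lemma non_multiple_coefficients_agree:
  assumes u: "u \<in> Q" and v: "v \<in> Q" and not_multiple: "\<forall>\<epsilon>\<in>F. v \<noteq> \<epsilon> u"
    and l: "l \<in> F" "l \<noteq> zero_map" and F: "\<gamma> \<in> F" "\<delta> \<in> F" "\<eta> \<in> F"
    and eq: "\<gamma> u + l (\<delta> v) = \<eta> u + l (\<eta> v)"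
  shows "\<delta> v = \<eta> v"
proof (rule ccontr)
  assume "\<delta> v \<noteq> \<eta> v"
  obtain d where d: "d \<in> F" "\<delta> v - \<eta> v = d v" using quasi_kernel_diff[OF v F(2,3)] by blast
  obtain e where e: "e \<in> F" "\<eta> u - \<gamma> u = e u" using quasi_kernel_diff[OF u F(3,1)] by blast
  define h where "h = l \<circ> d"
  have "d v \<noteq> 0" using \<open>\<delta> v \<noteq> \<eta> v\<close> d(2) by (metis right_minus_eq)
  then have "h v \<noteq> 0" unfolding h_def using F_eq_zero_iff[OF l] by simp
  then have h: "h \<in> F" "h \<noteq> zero_map"
    unfolding h_def using comp_in_F[OF l(1) d(1)] by (metis zero_map_apply)+
  have "h v = l (\<delta> v) - l (\<eta> v)" unfolding h_def using d(2)[symmetric] F_diff[OF l(1)] by simp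
  also have "\<dots> = - \<gamma> u + (\<gamma> u + l (\<delta> v)) - l (\<eta> v)" by simp
  also have "\<dots> = - \<gamma> u + (\<eta> u + l (\<eta> v)) - l (\<eta> v)" using eq by simp
  also have "\<dots> = - \<gamma> u + \<eta> u" by (simp add: add.assoc[symmetric])
  also have "\<dots> = e u" using e(2) by (metis abel.add.commute diff_conv_add_uminus)
  finally have "v = (inv h \<circ> e) u" using inv_f_f[OF bij_is_inj[OF F_bij[OF h]], of v] by simp
  moreover have "inv h \<circ> e \<in> F" using comp_in_F inv_in_F[OF h] e(1) by blast
  ultimately show False using not_multiple by blast
qed

lemma mem_block_of_if_sum_in_quasi_kernel:
  assumes u: "u \<in> Q" "u \<noteq> 0" and v: "v \<in> Q" and l: "l \<in> F" "l \<noteq> zero_map"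
    and ul: "u + l v \<in> Q"
  shows "v \<in> block_of u"
proof (rule mem_block_ofI[OF u(1)])
  fix \<alpha> \<beta> \<gamma> assume F: "\<alpha> \<in> F" "\<beta> \<in> F" "\<gamma> \<in> F" and rel: "\<alpha> u + \<beta> u = \<gamma> u"
  show "\<alpha> v + \<beta> v = \<gamma> v"
  proof (cases "\<exists>\<epsilon>\<in>F. v = \<epsilon> u")
    case True
    then obtain \<epsilon> where "\<epsilon> \<in> F" "v = \<epsilon> u" by blast
    then have "\<alpha> v + \<beta> v = \<epsilon> (\<alpha> u + \<beta> u)" using F by (simp add: F_add F_commute)
    then show ?thesis using rel F(3) \<open>\<epsilon> \<in> F\<close> \<open>v = \<epsilon> u\<close> by (simp add: F_commute)
  next
    case False
    obtain \<eta> where \<eta>: "\<eta> \<in> F" "\<alpha> (u + l v) + \<beta> (u + l v) = \<eta> (u + l v)"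
      using quasi_kernelD[OF ul F(1,2)] by blast
    obtain \<delta> where \<delta>: "\<delta> \<in> F" "\<alpha> v + \<beta> v = \<delta> v"
      using quasi_kernelD[OF v F(1,2)] by blast
    have "\<eta> u + l (\<eta> v) = \<eta> (u + l v)" using \<eta>(1) l(1) by (simp add: F_add F_commute)
    also have "\<dots> = (\<alpha> u + \<beta> u) + l (\<alpha> v + \<beta> v)"
      using \<eta>(2) F l(1) by (simp add: F_add F_commute abel.add_ac)
    also have "\<dots> = \<gamma> u + l (\<delta> v)" using rel \<delta>(2) by simp
    finally have eq: "\<gamma> u + l (\<delta> v) = \<eta> u + l (\<eta> v)" ..
    then have "\<delta> v = \<eta> v"
      using non_multiple_coefficients_agree[OF u(1) v _ l F(3) \<delta>(1) \<eta>(1)] False by blast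
    then have "\<gamma> = \<eta>" using eq F_eq_if_eq_at_nonzero[OF F(3) \<eta>(1) _ u(2)] by simp
    then show ?thesis using \<delta> \<open>\<delta> v = \<eta> v\<close> by simp
  qed
qed

lemma regular_subspace_subset_block_of:
  assumes u: "u \<in> Q" "u \<noteq> 0" and W: "regular_subspace F W" "u \<in> W"
  shows "W \<subseteq> block_of u"
proof -
  have "Q \<inter> W \<subseteq> block_of u"
  proof
    fix v assume v: "v \<in> Q \<inter> W"
    show "v \<in> block_of u"
    proof (cases "v = 0")
      case True
      then show ?thesis using zero_mem_block_of[OF u(1)] by simp
    next
      case False
      then obtain l where "l \<in> F" "l \<noteq> zero_map" "u + l v \<in> Q"
        using W v u unfolding regular_subspace_def by blast
      then show ?thesis using mem_block_of_if_sum_in_quasi_kernel u v by blast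
    qed
  qed
  then have "gen_grp (Q \<inter> W) \<subseteq> block_of u"
    using gen_grp_least add_subgroup_block_of[OF u(1)] by blast
  moreover have "W = gen_grp (Q \<inter> W)"
    using W(1) unfolding regular_subspace_def nv_subspace_def by blast
  ultimately show ?thesis by simp
qed

lemma is_block_regular: "is_block F W \<Longrightarrow> regular_subspace F W"
  and is_block_maximal: "is_block F W \<Longrightarrow> regular_subspace F W' \<Longrightarrow> W \<subseteq> W' \<Longrightarrow> W' = W"
  unfolding is_block_def by blast+

lemma is_block_nv_subspace: "is_block F W \<Longrightarrow> nv_subspace F W"
  using is_block_regular unfolding regular_subspace_def by blast

lemma is_block_block_of:
  assumes "u \<in> Q" "u \<noteq> 0"
  shows "is_block F (block_of u)"
  unfolding is_block_def
proof (intro conjI allI impI regular_subspace_block_of[OF assms(1)])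
  fix W assume "regular_subspace F W \<and> block_of u \<subseteq> W"
  then show "W = block_of u"
    using regular_subspace_subset_block_of[OF assms] self_mem_block_of[OF assms(1)] by blast
qed

lemma is_block_cases:
  assumes "is_block F W"
  obtains "W = {0}" | u where "u \<in> Q" "u \<noteq> 0" "W = block_of u"
proof (cases "Q \<inter> W \<subseteq> {0}")
  case True
  have "W = gen_grp (Q \<inter> W)" "0 \<in> W"
    using is_block_nv_subspace[OF assms] unfolding nv_subspace_def by blast+
  then have "W = {0}" using gen_grp_least[OF True add_subgroup_zero] by blast
  then show thesis by (rule that(1))
next
  case False
  then obtain u where u: "u \<in> Q" "u \<in> W" "u \<noteq> 0" by blast
  then have "W \<subseteq> block_of u"
    using regular_subspace_subset_block_of is_block_regular[OF assms] by blast
  then have "block_of u = W" by (rule is_block_maximal[OF assms regular_subspace_block_of[OF u(1)]])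
  then show thesis using that(2) u by blast
qed

lemma block_of_eq_if_mem:
  assumes "u \<in> Q" "u \<noteq> 0" "u' \<in> Q" "u' \<noteq> 0" "u \<in> block_of u'"
  shows "block_of u = block_of u'"
proof -
  have "block_of u' \<subseteq> block_of u"
    using regular_subspace_subset_block_of[OF assms(1,2) regular_subspace_block_of[OF assms(3)]]
      assms(5) .
  then show ?thesis
    by (rule is_block_maximal[OF is_block_block_of[OF assms(3,4)] regular_subspace_block_of[OF assms(1)]])
qed

lemma fbar_act_additive: "set l \<subseteq> F \<Longrightarrow> additive (fbar_act l)"
proof (induction l)
  case (Cons a l)
  then show ?case unfolding additive_def by (simp add: F_add abel.add_ac)
qed (simp add: additive_def)

lemma fbar_act_mem: "set l \<subseteq> F \<Longrightarrow> nv_subspace F W \<Longrightarrow> v \<in> W \<Longrightarrow> fbar_act l v \<in> W"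
  by (induction l) (auto simp: nv_subspace_def)

lemma tm_eval_additive: "tm_wf F t \<Longrightarrow> additive (tm_eval t)"
proof (induction t)
  case (Add s t)
  then show ?case unfolding additive_def by (simp add: abel.add_ac)
next
  case (Act l t)
  then show ?case using fbar_act_additive unfolding additive_def by simp
qed (simp_all add: additive_def)

lemma foldr_fbar_act_mem:
  "\<forall>l\<in>set ls. set l \<subseteq> F \<Longrightarrow> nv_subspace F W \<Longrightarrow> v \<in> W \<Longrightarrow> foldr fbar_act ls v \<in> W"
  by (induction ls) (simp_all add: fbar_act_mem)

lemma foldr_fbar_act_vanishes:
  assumes "\<forall>l\<in>set ls. set l \<subseteq> F" "nv_subspace F W" "v \<in> W"
    and "l \<in> set ls" "\<forall>w\<in>W. fbar_act l w = 0"
  shows "foldr fbar_act ls v = 0"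
  using assms
proof (induction ls)
  case (Cons m ls)
  show ?case
  proof (cases "m = l")
    case True
    then show ?thesis using Cons.prems foldr_fbar_act_mem by simp
  next
    case False
    then show ?thesis using Cons additive_zero[OF fbar_act_additive, of m] by simp
  qed
qed simp

lemma foldr_fbar_act_kernel_trivial:
  assumes "\<forall>l\<in>set ls. set l \<subseteq> F \<and> (\<forall>w\<in>W. fbar_act l w = 0 \<longrightarrow> w = 0)"
    and "nv_subspace F W" "v \<in> W" "foldr fbar_act ls v = 0"
  shows "v = 0"
  using assms
proof (induction ls)
  case (Cons l ls)
  then have "foldr fbar_act ls v \<in> W" using foldr_fbar_act_mem by simp
  then show ?case using Cons by simp
qed simp

lemma fbar_act_relation: "fbar_act [\<alpha>, \<beta>, uminus \<circ> \<gamma>] v = 0 \<longleftrightarrow> \<alpha> v + \<beta> v = \<gamma> v"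
  by (simp add: add_diff_eq)

lemma separating_fbar_element:
  assumes "is_block F W" "is_block F W'" "W \<noteq> W'"
  obtains l where "set l \<subseteq> F" "\<And>v. v \<in> W' \<Longrightarrow> fbar_act l v = 0"
    "\<And>v. v \<in> W \<Longrightarrow> fbar_act l v = 0 \<Longrightarrow> v = 0"
proof -
  consider "W' = {0}" | "W = {0}"
    | u u' where "u \<in> Q" "u \<noteq> 0" "W = block_of u" "u' \<in> Q" "u' \<noteq> 0" "W' = block_of u'"
    using is_block_cases[OF assms(1)] is_block_cases[OF assms(2)] by metis
  then show thesis
  proof cases
    case 1
    then show ?thesis using that[of "[id]"] id_in_F by simp
  next
    case 2
    then show ?thesis using that[of "[]"] by simp
  next
    case 3
    then have "u \<notin> block_of u'" using block_of_eq_if_mem assms(3) by blast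
    then obtain \<alpha> \<beta> \<gamma> where F: "\<alpha> \<in> F" "\<beta> \<in> F" "\<gamma> \<in> F"
      and "\<alpha> u' + \<beta> u' = \<gamma> u'" and not_rel: "\<alpha> u + \<beta> u \<noteq> \<gamma> u"
      using 3 unfolding block_of_def by blast
    show ?thesis
    proof (rule that[of "[\<alpha>, \<beta>, uminus \<circ> \<gamma>]"])
      show "set [\<alpha>, \<beta>, uminus \<circ> \<gamma>] \<subseteq> F" using F comp_in_F[OF uminus_in_F] by simp
      show "fbar_act [\<alpha>, \<beta>, uminus \<circ> \<gamma>] v = 0" if "v \<in> W'" for v
        unfolding fbar_act_relation
        using mem_block_ofD[of v u' \<alpha> \<beta> \<gamma>] 3 F \<open>\<alpha> u' + \<beta> u' = \<gamma> u'\<close> that by simp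
      show "v = 0" if "v \<in> W" and "fbar_act [\<alpha>, \<beta>, uminus \<circ> \<gamma>] v = 0" for v
      proof (rule ccontr)
        assume "v \<noteq> 0"
        obtain \<gamma>' where "\<gamma>' \<in> F" "\<alpha> u + \<beta> u = \<gamma>' u" using quasi_kernelD[OF 3(1) F(1,2)] by blast
        then have "\<gamma>' v = \<gamma> v"
          using mem_block_ofD[of v u \<alpha> \<beta> \<gamma>'] that 3 F
          unfolding fbar_act_relation by simp
        then have "\<gamma>' = \<gamma>" using F_eq_if_eq_at_nonzero \<open>\<gamma>' \<in> F\<close> F(3) \<open>v \<noteq> 0\<close> by blast
        then show False using \<open>\<alpha> u + \<beta> u = \<gamma>' u\<close> not_rel by simp
      qed
    qed
  qed
qed

lemma block_projection_terms:
  assumes "finite I" and B: "bij_betw B I {W. is_block F W}"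
  obtains T where "\<And>i. i \<in> I \<Longrightarrow> tm_wf F (T i)"
    and "\<And>i k v. i \<in> I \<Longrightarrow> k \<in> I \<Longrightarrow> k \<noteq> i \<Longrightarrow> v \<in> B k \<Longrightarrow> tm_eval (T i) v = 0"
    and "\<And>i v. i \<in> I \<Longrightarrow> v \<in> B i \<Longrightarrow> tm_eval (T i) v = 0 \<Longrightarrow> v = 0"
proof -
  have block: "is_block F (B i)" if "i \<in> I" for i
    using bij_betw_apply[OF B that] by simp
  have distinct: "B i \<noteq> B j" if "i \<in> I" "j \<in> I" "i \<noteq> j" for i j
    using bij_betw_imp_inj_on[OF B] that by (auto dest: inj_onD)
  define separates where "separates i j l \<longleftrightarrow> set l \<subseteq> F \<and> (\<forall>v\<in>B j. fbar_act l v = 0)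
    \<and> (\<forall>v\<in>B i. fbar_act l v = 0 \<longrightarrow> v = 0)" for i j l
  have "\<forall>i j. \<exists>l. i \<in> I \<and> j \<in> I \<and> i \<noteq> j \<longrightarrow> separates i j l"
    unfolding separates_def using separating_fbar_element[OF block block distinct] by metis
  then obtain L where L: "\<And>i j. i \<in> I \<Longrightarrow> j \<in> I \<Longrightarrow> i \<noteq> j \<Longrightarrow> separates i j (L i j)"
    by metis
  have "\<forall>i. \<exists>js. set js = I - {i}" using finite_list \<open>finite I\<close> by blast
  then obtain js where js: "\<And>i. set (js i) = I - {i}" by metis
  have L_js: "\<forall>l\<in>set (map (L i) (js i)). set l \<subseteq> F \<and> (\<forall>w\<in>B i. fbar_act l w = 0 \<longrightarrow> w = 0)"
    if "i \<in> I" for i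
  proof
    fix l assume "l \<in> set (map (L i) (js i))"
    then obtain j where "j \<in> I" "j \<noteq> i" "l = L i j" using js by auto
    then show "set l \<subseteq> F \<and> (\<forall>w\<in>B i. fbar_act l w = 0 \<longrightarrow> w = 0)"
      using L[of i j] that unfolding separates_def by simp
  qed
  show thesis
  proof (rule that[of "\<lambda>i. comp_tm (map (L i) (js i))"])
    show "tm_wf F (comp_tm (map (L i) (js i)))" if "i \<in> I" for i
      unfolding tm_wf_comp_tm using L_js[OF that] by blast
    show "tm_eval (comp_tm (map (L i) (js i))) v = 0"
      if "i \<in> I" "k \<in> I" "k \<noteq> i" "v \<in> B k" for i k v
      unfolding tm_eval_comp_tm
    proof (rule foldr_fbar_act_vanishes)
      show "\<forall>l\<in>set (map (L i) (js i)). set l \<subseteq> F" using L_js \<open>i \<in> I\<close> by blast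
      show "L i k \<in> set (map (L i) (js i))" using js that by simp
      show "\<forall>w\<in>B k. fbar_act (L i k) w = 0" using L[of i k] that separates_def by simp
    qed (use is_block_nv_subspace block that in auto)
    show "v = 0" if "i \<in> I" "v \<in> B i" "tm_eval (comp_tm (map (L i) (js i))) v = 0" for i v
      using foldr_fbar_act_kernel_trivial[OF L_js is_block_nv_subspace[OF block]] that
      unfolding tm_eval_comp_tm by blast
  qed
qed

lemma gen_grp_blocks_eq_UNIV:
  assumes "bij_betw B I {W. is_block F W}"
  shows "gen_grp (\<Union>i\<in>I. B i) = UNIV"
proof -
  have "Q \<subseteq> gen_grp (\<Union>i\<in>I. B i)"
  proof
    fix q assume "q \<in> Q"
    show "q \<in> gen_grp (\<Union>i\<in>I. B i)"
    proof (cases "q = 0")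
      case True
      then show ?thesis by (simp add: gen_grp.gen_zero)
    next
      case False
      then have "block_of q \<in> B ` I"
        using is_block_block_of[OF \<open>q \<in> Q\<close>] assms unfolding bij_betw_def by blast
      then show ?thesis using self_mem_block_of[OF \<open>q \<in> Q\<close>] gen_grp.gen_base by blast
    qed
  qed
  then show ?thesis
    using gen_grp_least[OF _ add_subgroup_gen_grp] quasi_kernel_generates by blast
qed

end

theorem mainTheorem15:
  fixes F :: "('v::group_add \<Rightarrow> 'v) set"
    and B :: "'i \<Rightarrow> 'v set" and I :: "'i set"
  assumes "near_vector_space F"
    and "commutative_nvs F"
    and "finite I"
    and "bij_betw B I {W. is_block F W}"
  shows "\<forall>\<Delta>\<subseteq>I. qf_definable F (gen_grp (\<Union>i\<in>\<Delta>. B i))"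
proof (intro allI impI)
  fix \<Delta> assume "\<Delta> \<subseteq> I"
  interpret commutative_near_vector_space F
    using assms(1,2) by unfold_locales
  obtain T where wf: "\<And>i. i \<in> I \<Longrightarrow> tm_wf F (T i)"
    and kills: "\<And>i k v. i \<in> I \<Longrightarrow> k \<in> I \<Longrightarrow> k \<noteq> i \<Longrightarrow> v \<in> B k \<Longrightarrow> tm_eval (T i) v = 0"
    and injective: "\<And>i v. i \<in> I \<Longrightarrow> v \<in> B i \<Longrightarrow> tm_eval (T i) v = 0 \<Longrightarrow> v = 0"
    using block_projection_terms[OF assms(3,4)] by blast
  have "gen_grp (\<Union>i\<in>\<Delta>. B i) = {v. \<forall>i\<in>I - \<Delta>. tm_eval (T i) v = 0}"
  proof (rule gen_grp_UN_eq_common_kernel[OF add_commute assms(3) \<open>\<Delta> \<subseteq> I\<close>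
        gen_grp_blocks_eq_UNIV[OF assms(4)] _ tm_eval_additive[OF wf] kills injective])
    show "add_subgroup (B i)" if "i \<in> I" for i
      by (rule nv_subspace_add_subgroup[OF is_block_nv_subspace])
        (use bij_betw_apply[OF assms(4) that] in simp)
  qed
  then show "qf_definable F (gen_grp (\<Union>i\<in>\<Delta>. B i))"
    using qf_definable_common_zeros[of "I - \<Delta>" F T] assms(3) wf by simp
qed

end
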